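(* Let $\mathcal{H} = L^2(\mathbb{R})$ in the momentum representation and let $T$ be the operator $T = i(2p)^{-1}\frac{d}{dp} + i\frac{d}{dp}(2p)^{-1}$ (i.e. $T=(2p)^{-1}q+q(2p)^{-1}$ with $q=i\,d/dp$) on the domain $\mathcal{D}(T)$ of infinitely differentiable functions with compact support contained in $\mathbb{R}\setminus\{0\}$. For $t\in\mathbb{R}$, $\alpha\in\{+1,-1\}$ let $\psi_{t\alpha}(p) = \frac{1}{\sqrt{2\pi}}\theta(\alpha p)\sqrt{|p|}\exp(-itp^2/2)$ ($\theta$ the Heaviside function), let $\phi(t,\alpha)=\int_{\mathbb{R}}\overline{\psi_{t\alpha}(p)}\phi(p)\,dp$, and let $\tau$ be the positive-operator-valued measure on $\mathbb{R}$ given by $\langle\phi|\tau(X)|\phi\rangle=\sum_{\alpha=\pm1}\int_X|\phi(t,\alpha)|^2\,dt$ for Borel $X$. Then for every $\phi\in\mathcal{D}(T)$ with $\langle\phi|\phi\rangle=1$, $$\langle\phi|T|\phi\rangle=\int_{\mathbb{R}} t\,\langle\phi|\tau(dt)|\phi\rangle,\qquad \langle\phi|T^2|\phi\rangle=\int_{\mathbb{R}} t^2\,\langle\phi|\tau(dt)|\phi\rangle,$$ and consequently $\sigma_T^2=\operatorname{var}(\tau,\phi)$, where $\sigma_T^2=\langle\phi|T^2|\phi\rangle-\langle\phi|T|\phi\rangle^2$.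
   Context: For a POV-measure $\tau$ on $\mathbb{R}$ and a unit vector $\phi$, $\tau_\phi(X)=\langle\phi|\tau(X)|\phi\rangle$ is a probability measure; $\operatorname{mean}(\tau,\phi)=\int\lambda\,\tau_\phi(d\lambda)$ and $\operatorname{var}(\tau,\phi)=\int\lambda^2\,\tau_\phi(d\lambda)-(\operatorname{mean}(\tau,\phi))^2$. *)

theory Defs
  imports "HOL-Analysis.Analysis"
begin

definition smooth_fun :: "(real \<Rightarrow> complex) \<Rightarrow> bool" where
  "smooth_fun f \<longleftrightarrow> (\<exists>D :: nat \<Rightarrow> real \<Rightarrow> complex. D 0 = f \<and>
      (\<forall>n x. (D n has_vector_derivative D (Suc n) x) (at x)))"

definition supp_cl :: "(real \<Rightarrow> complex) \<Rightarrow> real set" where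
  "supp_cl f = closure {p. f p \<noteq> 0}"

definition domT :: "(real \<Rightarrow> complex) set" where
  "domT = {f. smooth_fun f \<and> compact (supp_cl f) \<and> supp_cl f \<subseteq> - {0}}"

definition opT :: "(real \<Rightarrow> complex) \<Rightarrow> real \<Rightarrow> complex" where
  "opT f p = \<i> * complex_of_real (1 / (2 * p)) * vector_derivative f (at p)
           + \<i> * vector_derivative (\<lambda>x. complex_of_real (1 / (2 * x)) * f x) (at p)"

definition inner_L2 :: "(real \<Rightarrow> complex) \<Rightarrow> (real \<Rightarrow> complex) \<Rightarrow> complex" where
  "inner_L2 f g = (LINT p|lborel. cnj (f p) * g p)"

definition heaviside :: "real \<Rightarrow> real" where
  "heaviside x = (if x \<ge> 0 then 1 else 0)"

definition psi :: "real \<Rightarrow> real \<Rightarrow> real \<Rightarrow> complex" where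
  "psi t \<alpha> p = complex_of_real (1 / sqrt (2 * pi) * heaviside (\<alpha> * p) * sqrt \<bar>p\<bar>)
                 * exp (- \<i> * complex_of_real (t * p\<^sup>2 / 2))"

definition phi_trans :: "(real \<Rightarrow> complex) \<Rightarrow> real \<Rightarrow> real \<Rightarrow> complex" where
  "phi_trans f t \<alpha> = (LINT p|lborel. cnj (psi t \<alpha> p) * f p)"

text \<open>The probability measure tau_phi(X) = <phi|tau(X)|phi> = sum_alpha int_X |phi(t,alpha)|^2 dt.\<close>
definition tau_phi :: "(real \<Rightarrow> complex) \<Rightarrow> real measure" where
  "tau_phi f = density lborel (\<lambda>t. ennreal (\<Sum>\<alpha>\<in>{1, -1::real}. (cmod (phi_trans f t \<alpha>))\<^sup>2))"

definition mean_tau :: "(real \<Rightarrow> complex) \<Rightarrow> real" where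
  "mean_tau f = (\<integral>x. x \<partial>tau_phi f)"

definition var_tau :: "(real \<Rightarrow> complex) \<Rightarrow> real" where
  "var_tau f = (\<integral>x. x\<^sup>2 \<partial>tau_phi f) - (mean_tau f)\<^sup>2"

definition sigmaT_sq :: "(real \<Rightarrow> complex) \<Rightarrow> complex" where
  "sigmaT_sq f = inner_L2 f (opT (opT f)) - (inner_L2 f (opT f))\<^sup>2"

end

theory Submission
  imports Defs "HOL-Probability.Characteristic_Functions" "HOL-Probability.Sinc_Integral"
begin

text \<open>
  The \<open>\<psi>\<^sub>t\<^sub>\<alpha>\<close> are generalised eigenfunctions of \<open>T\<close>: for \<open>f\<close> supported in a shell
  \<open>0 < a < |p| < b\<close>, an integration by parts gives \<open>(Tf)(t,\<alpha>) = t f(t,\<alpha>)\<close>.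
  The transform is moreover isometric: on each branch \<open>\<alpha>p > 0\<close> the substitution
  \<open>E = p\<^sup>2/2\<close> turns \<open>f(t,\<alpha>)\<close> into the Fourier transform of a compactly supported
  continuous function of the energy, so Plancherel's identity gives
  \<open>\<Sum>\<^sub>\<alpha> \<integral> conj f\<^sub>1(t,\<alpha>) f\<^sub>2(t,\<alpha>) dt = \<langle>f\<^sub>1|f\<^sub>2\<rangle>\<close>.
  Applied to \<open>f\<^sub>1 = \<phi>\<close> and \<open>f\<^sub>2 = T\<^sup>k\<phi>\<close> this yields
  \<open>\<langle>\<phi>|T\<^sup>k\<phi>\<rangle> = \<Sum>\<^sub>\<alpha> \<integral> t\<^sup>k |\<phi>(t,\<alpha>)|\<^sup>2 dt\<close> for \<open>k \<le> 2\<close>; the integrals converge because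
  both \<open>\<phi>(t,\<alpha>)\<close> and \<open>t\<^sup>2\<phi>(t,\<alpha>) = (T\<^sup>2\<phi>)(t,\<alpha>)\<close> are bounded.
\<close>


section \<open>A Plancherel identity for compactly supported continuous functions\<close>

lemma borel_measurable_cnj [measurable]:
  fixes f :: "'a \<Rightarrow> complex"
  assumes "f \<in> borel_measurable M"
  shows "(\<lambda>x. cnj (f x)) \<in> borel_measurable M"
  using measurable_compose[OF assms borel_measurable_continuous_onI[OF continuous_on_cnj[OF continuous_on_id]]]
  by simp

lemma
  fixes h :: "real \<Rightarrow> 'a::euclidean_space"
  assumes "continuous_on {A..B} h" "\<And>x. h x \<noteq> 0 \<Longrightarrow> x \<in> {A..B}"
  shows integrable_vanishing_outside_Icc: "integrable lborel h"
    and integral_vanishing_outside_Icc: "integral\<^sup>L lborel h = integral {A..B} h"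
proof -
  have eq: "h = (\<lambda>x. indicator {A..B} x *\<^sub>R h x)"
    using assms(2) by (auto simp: indicator_def fun_eq_iff)
  show "integrable lborel h"
    by (subst eq) (rule borel_integrable_compact[OF compact_Icc assms(1)])
  have "set_integrable lborel {A..B} h" unfolding set_integrable_def
    by (rule borel_integrable_compact[OF compact_Icc assms(1)])
  from set_borel_integral_eq_integral(2)[OF this] show "integral\<^sup>L lborel h = integral {A..B} h"
    unfolding set_lebesgue_integral_def by (subst eq) simp
qed

lemma bounded_vanishing_outside_Icc:
  fixes h :: "real \<Rightarrow> 'a::real_normed_vector"
  assumes "continuous_on {A..B} h" "\<And>x. h x \<noteq> 0 \<Longrightarrow> x \<in> {A..B}"
  obtains M where "M \<ge> 0" "\<And>x. norm (h x) \<le> M"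
proof -
  obtain M where M: "M > 0" "\<And>y. y \<in> h ` {A..B} \<Longrightarrow> norm y \<le> M"
    using compact_continuous_image[OF assms(1) compact_Icc] compact_imp_bounded bounded_pos by metis
  have "norm (h x) \<le> M" for x
    using M assms(2)[of x] by (cases "h x = 0") auto
  with M(1) show ?thesis using that by (meson less_le)
qed

lemma Fubini_integral_product_bound:
  fixes F :: "real \<Rightarrow> real \<Rightarrow> complex" and a b :: "real \<Rightarrow> real"
  assumes "(\<lambda>(x,y). F x y) \<in> borel_measurable (lborel \<Otimes>\<^sub>M lborel)"
    and "\<And>x y. norm (F x y) \<le> a x * b y" and "integrable lborel a" and "integrable lborel b"
  shows "(\<integral>x. (\<integral>y. F x y \<partial>lborel) \<partial>lborel) = (\<integral>y. (\<integral>x. F x y \<partial>lborel) \<partial>lborel)"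
proof -
  have [measurable]: "a \<in> borel_measurable lborel" "b \<in> borel_measurable lborel"
    using assms(3,4) by auto
  have "integrable (lborel \<Otimes>\<^sub>M lborel) (\<lambda>(x,y). a x * b y)"
  proof (rule lborel_pair.Fubini_integrable)
    have "integrable lborel (\<lambda>x. \<bar>a x\<bar> * (\<integral>y. \<bar>b y\<bar> \<partial>lborel))"
      using assms(3) by (intro integrable_mult_left) auto
    then show "integrable lborel (\<lambda>x. \<integral>y. norm (case (x, y) of (x, y) \<Rightarrow> a x * b y) \<partial>lborel)"
      by (simp add: abs_mult)
    show "AE x in lborel. integrable lborel (\<lambda>y. case (x, y) of (x, y) \<Rightarrow> a x * b y)"
      using assms(4) by (auto intro: integrable_mult_right)
  qed measurable
  then have "integrable (lborel \<Otimes>\<^sub>M lborel) (\<lambda>(x,y). F x y)"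
    by (rule Bochner_Integration.integrable_bound)
       (use assms(1,2) in \<open>auto split: prod.splits intro: order_trans[OF _ abs_ge_self]\<close>)
  then show ?thesis using lborel_pair.Fubini_integral[of F] by simp
qed

lemma integrable_gaussian: "integrable lborel (\<lambda>s::real. exp (-(s^2)/2))"
proof -
  have "integrable lborel (\<lambda>x. sqrt (2*pi) * (std_normal_density x * x^0))"
    using integrable_std_normal_moment[of 0] by (rule integrable_mult_right)
  then show ?thesis by (simp add: std_normal_density_def)
qed

lemma integral_gaussian: "(\<integral>s. exp (-(s^2)/2) \<partial>lborel) = sqrt (2*pi)"
proof -
  have "(\<integral>x. sqrt (2*pi) * (std_normal_density x * x^(2*0)) \<partial>lborel) = sqrt (2*pi)"
    using integral_std_normal_moment_even[of 0] by simp
  then show ?thesis by (simp add: std_normal_density_def)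
qed

definition fourier :: "(real \<Rightarrow> complex) \<Rightarrow> real \<Rightarrow> complex" where
  "fourier g t = (\<integral>x. exp (\<i> * complex_of_real (t * x)) * g x \<partial>lborel)"

lemma fourier_gaussian:
  "fourier (\<lambda>s. complex_of_real (exp (-(s^2)/2))) x = complex_of_real (sqrt (2*pi) * exp (-(x^2)/2))"
proof -
  have "char std_normal_distribution x = complex_of_real (exp (-(x^2)/2))"
    by (simp add: char_std_normal_distribution)
  moreover have "char std_normal_distribution x
      = (\<integral>s. std_normal_density s *\<^sub>R exp (\<i> * complex_of_real (x * s)) \<partial>lborel)"
    unfolding char_def by (subst integral_density) auto
  ultimately have char: "(\<integral>s. std_normal_density s *\<^sub>R exp (\<i> * complex_of_real (x * s)) \<partial>lborel)
      = complex_of_real (exp (-(x^2)/2))"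
    by simp
  have "fourier (\<lambda>s. complex_of_real (exp (-(s^2)/2))) x
     = (\<integral>s. complex_of_real (sqrt (2*pi)) * (std_normal_density s *\<^sub>R exp (\<i> * complex_of_real (x * s))) \<partial>lborel)"
    unfolding fourier_def
    by (intro Bochner_Integration.integral_cong) (auto simp: std_normal_density_def scaleR_conv_of_real)
  also have "\<dots> = complex_of_real (sqrt (2*pi)) * complex_of_real (exp (-(x^2)/2))"
    by (simp only: integral_mult_right_zero char)
  finally show ?thesis by simp
qed

lemma fourier_gaussian_scaled:
  assumes "\<sigma> > 0"
  shows "fourier (\<lambda>t. complex_of_real (exp (-((\<sigma>*t)^2)/2))) u
     = complex_of_real (sqrt (2*pi) / \<sigma> * exp (-((u/\<sigma>)^2)/2))"
proof -
  have "fourier (\<lambda>t. complex_of_real (exp (-((\<sigma>*t)^2)/2))) u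
    = \<bar>1/\<sigma>\<bar> *\<^sub>R (\<integral>s. exp (\<i> * complex_of_real (u * (0 + (1/\<sigma>) * s)))
                   * complex_of_real (exp (-((\<sigma>*(0 + (1/\<sigma>) * s))^2)/2)) \<partial>lborel)"
    unfolding fourier_def by (rule lborel_integral_real_affine) (use assms in auto)
  also have "\<dots> = (1/\<sigma>) *\<^sub>R fourier (\<lambda>s. complex_of_real (exp (-(s^2)/2))) (u/\<sigma>)"
    using assms unfolding fourier_def by (simp add: field_simps)
  also have "\<dots> = complex_of_real (sqrt (2*pi) / \<sigma> * exp (-((u/\<sigma>)^2)/2))"
    unfolding fourier_gaussian by (simp add: scaleR_conv_of_real)
  finally show ?thesis .
qed

lemma integral_gaussian_regularized_fourier:
  fixes h :: "real \<Rightarrow> complex"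
  assumes h: "integrable lborel h" and s: "s > 0"
  shows "(\<integral>t. complex_of_real (exp (-((s*t)^2)/2)) * fourier h t \<partial>lborel)
       = (\<integral>v. h (s * v) * complex_of_real (sqrt (2*pi) * exp (-(v^2)/2)) \<partial>lborel)"
proof -
  have [measurable]: "h \<in> borel_measurable lborel" using h by auto
  have "integrable lborel (\<lambda>t. exp (-((0 + s*t)^2)/2) :: real)"
    by (rule lborel_integrable_real_affine[OF integrable_gaussian]) (use s in auto)
  then have gauss: "integrable lborel (\<lambda>t. exp (-((s*t)^2)/2) :: real)" by simp
  have "(\<integral>t. complex_of_real (exp (-((s*t)^2)/2)) * fourier h t \<partial>lborel)
     = (\<integral>t. (\<integral>u. complex_of_real (exp (-((s*t)^2)/2)) * (exp (\<i> * complex_of_real (t * u)) * h u) \<partial>lborel) \<partial>lborel)"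
    unfolding fourier_def by (simp only: integral_mult_right_zero)
  also have "\<dots> = (\<integral>u. (\<integral>t. complex_of_real (exp (-((s*t)^2)/2)) * (exp (\<i> * complex_of_real (t * u)) * h u) \<partial>lborel) \<partial>lborel)"
    by (rule Fubini_integral_product_bound[where a="\<lambda>t. exp (-((s*t)^2)/2)" and b="\<lambda>u. norm (h u)"])
       (use gauss h in \<open>simp_all add: norm_mult\<close>)
  also have "\<dots> = (\<integral>u. h u * fourier (\<lambda>t. complex_of_real (exp (-((s*t)^2)/2))) u \<partial>lborel)"
  proof (intro Bochner_Integration.integral_cong refl)
    fix u
    have "(\<lambda>t. complex_of_real (exp (-((s*t)^2)/2)) * (exp (\<i> * complex_of_real (t * u)) * h u))
        = (\<lambda>t. h u * (exp (\<i> * complex_of_real (u * t)) * complex_of_real (exp (-((s*t)^2)/2))))"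
      by (simp add: mult_ac)
    then show "(\<integral>t. complex_of_real (exp (-((s*t)^2)/2)) * (exp (\<i> * complex_of_real (t * u)) * h u) \<partial>lborel)
        = h u * fourier (\<lambda>t. complex_of_real (exp (-((s*t)^2)/2))) u"
      unfolding fourier_def by (simp only: integral_mult_right_zero)
  qed
  also have "\<dots> = (\<integral>u. h u * complex_of_real (sqrt (2*pi) / s * exp (-((u/s)^2)/2)) \<partial>lborel)"
    by (simp only: fourier_gaussian_scaled[OF s])
  also have "\<dots> = \<bar>s\<bar> *\<^sub>R (\<integral>v. h (0 + s * v) * complex_of_real (sqrt (2*pi) / s * exp (-(((0 + s * v)/s)^2)/2)) \<partial>lborel)"
    by (rule lborel_integral_real_affine) (use s in auto)
  also have "\<dots> = (\<integral>v. h (s * v) * complex_of_real (sqrt (2*pi) * exp (-(v^2)/2)) \<partial>lborel)"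
  proof -
    have "(\<integral>v. h (0 + s * v) * complex_of_real (sqrt (2*pi) / s * exp (-(((0 + s * v)/s)^2)/2)) \<partial>lborel)
       = (\<integral>v. complex_of_real (1/s) * (h (s * v) * complex_of_real (sqrt (2*pi) * exp (-(v^2)/2))) \<partial>lborel)"
      using s by (intro Bochner_Integration.integral_cong refl) (simp add: mult_ac)
    then show ?thesis
      using s by (simp add: scaleR_conv_of_real integral_mult_right_zero)
  qed
  finally show ?thesis .
qed

lemma tendsto_integral_gaussian_damped:
  fixes F :: "real \<Rightarrow> complex"
  assumes F: "integrable lborel F" and \<sigma>: "\<sigma> \<longlonglongrightarrow> 0"
  shows "(\<lambda>n. \<integral>t. complex_of_real (exp (-((\<sigma> n*t)^2)/2)) * F t \<partial>lborel) \<longlonglongrightarrow> (\<integral>t. F t \<partial>lborel)"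
proof (rule integral_dominated_convergence[where w="\<lambda>t. norm (F t)"])
  show "AE t in lborel. (\<lambda>n. complex_of_real (exp (-((\<sigma> n*t)^2)/2)) * F t) \<longlonglongrightarrow> F t"
  proof (rule AE_I2)
    fix t
    have "(\<lambda>n. complex_of_real (exp (-((\<sigma> n*t)^2)/2)) * F t)
        \<longlonglongrightarrow> complex_of_real (exp (-((0*t)^2)/2)) * F t"
      by (intro tendsto_intros \<sigma>) simp
    then show "(\<lambda>n. complex_of_real (exp (-((\<sigma> n*t)^2)/2)) * F t) \<longlonglongrightarrow> F t"
      by simp
  qed
  show "AE t in lborel. norm (complex_of_real (exp (-((\<sigma> n*t)^2)/2)) * F t) \<le> norm (F t)" for n
    by (intro AE_I2) (simp add: norm_mult mult_left_le_one_le)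
qed (use F in auto)

lemma tendsto_integral_rescaled_gaussian:
  fixes h :: "real \<Rightarrow> complex"
  assumes [measurable]: "h \<in> borel_measurable lborel"
    and bound: "\<And>u. norm (h u) \<le> M" and cont: "isCont h 0" and \<sigma>: "\<sigma> \<longlonglongrightarrow> 0"
  shows "(\<lambda>n. \<integral>v. h (\<sigma> n * v) * complex_of_real (sqrt (2*pi) * exp (-(v^2)/2)) \<partial>lborel) \<longlonglongrightarrow> 2 * pi * h 0"
proof -
  have "(\<lambda>n. \<integral>v. h (\<sigma> n * v) * complex_of_real (sqrt (2*pi) * exp (-(v^2)/2)) \<partial>lborel)
      \<longlonglongrightarrow> (\<integral>v. h 0 * complex_of_real (sqrt (2*pi) * exp (-(v^2)/2)) \<partial>lborel)"
  proof (rule integral_dominated_convergence[where w="\<lambda>v. M * (sqrt (2*pi) * exp (-(v^2)/2))"])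
    show "integrable lborel (\<lambda>v. M * (sqrt (2*pi) * exp (-(v^2)/2)))"
      using integrable_gaussian by (intro integrable_mult_right) auto
    have "(\<lambda>n. h (\<sigma> n * v)) \<longlonglongrightarrow> h 0" for v
      using isCont_tendsto_compose[OF cont, of "\<lambda>n. \<sigma> n * v"] \<sigma> by (auto intro: tendsto_mult_left_zero)
    then show "AE v in lborel. (\<lambda>n. h (\<sigma> n * v) * complex_of_real (sqrt (2*pi) * exp (-(v^2)/2)))
        \<longlonglongrightarrow> h 0 * complex_of_real (sqrt (2*pi) * exp (-(v^2)/2))"
      by (intro AE_I2 tendsto_intros)
    show "AE v in lborel. norm (h (\<sigma> n * v) * complex_of_real (sqrt (2*pi) * exp (-(v^2)/2)))
        \<le> M * (sqrt (2*pi) * exp (-(v^2)/2))" for n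
      using bound by (intro AE_I2) (simp add: norm_mult mult_right_mono)
  qed auto
  also have "(\<integral>v. h 0 * complex_of_real (sqrt (2*pi) * exp (-(v^2)/2)) \<partial>lborel)
      = h 0 * complex_of_real (sqrt (2*pi) * sqrt (2*pi))"
    using integral_gaussian by (simp del: real_sqrt_mult_self)
  also have "\<dots> = 2 * pi * h 0" by simp
  finally show ?thesis .
qed

text \<open>Fourier inversion at \<open>0\<close> by Gaussian summability: damped by \<open>exp (-(\<sigma>t)\<^sup>2/2)\<close>, the
  integral of \<open>fourier h\<close> is a Gaussian average of \<open>h\<close> at scale \<open>\<sigma>\<close>; let \<open>\<sigma> \<rightarrow> 0\<close>.\<close>
lemma integral_fourier:
  fixes h :: "real \<Rightarrow> complex"
  assumes h: "integrable lborel h" and bound: "\<And>u. norm (h u) \<le> M" and cont: "isCont h 0"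
    and fourier_h: "integrable lborel (fourier h)"
  shows "(\<integral>t. fourier h t \<partial>lborel) = 2 * pi * h 0"
proof -
  define \<sigma> :: "nat \<Rightarrow> real" where "\<sigma> n = 1 / real (Suc n)" for n
  have \<sigma>_pos: "\<sigma> n > 0" for n unfolding \<sigma>_def by simp
  have \<sigma>_lim: "\<sigma> \<longlonglongrightarrow> 0"
    unfolding \<sigma>_def using LIMSEQ_Suc[OF lim_1_over_n] by simp
  have "(\<lambda>n. \<integral>t. complex_of_real (exp (-((\<sigma> n*t)^2)/2)) * fourier h t \<partial>lborel) \<longlonglongrightarrow> 2 * pi * h 0"
    unfolding integral_gaussian_regularized_fourier[OF h \<sigma>_pos]
    using h by (intro tendsto_integral_rescaled_gaussian[OF _ bound cont \<sigma>_lim]) auto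
  with tendsto_integral_gaussian_damped[OF fourier_h \<sigma>_lim] show ?thesis
    by (rule LIMSEQ_unique)
qed

lemma cnj_fourier_mult_fourier:
  "cnj (fourier g1 t) * fourier g2 t
    = (\<integral>x. (\<integral>u. exp (\<i> * complex_of_real (t * u)) * (cnj (g1 x) * g2 (x + u)) \<partial>lborel) \<partial>lborel)"
proof -
  have phase: "cnj (exp (\<i> * complex_of_real (t * x))) * exp (\<i> * complex_of_real (t * (x + u)))
      = exp (\<i> * complex_of_real (t * u))" for x u
    by (simp add: exp_cnj algebra_simps flip: exp_add)
  have "cnj (fourier g1 t) * fourier g2 t
      = (\<integral>x. cnj (exp (\<i> * complex_of_real (t * x)) * g1 x) * fourier g2 t \<partial>lborel)"
    unfolding fourier_def[of g1] by (simp only: Bochner_Integration.integral_cnj integral_mult_left_zero)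
  also have "\<dots> = (\<integral>x. (\<integral>u. cnj (exp (\<i> * complex_of_real (t * x)) * g1 x)
                     * (exp (\<i> * complex_of_real (t * (x + 1 * u))) * g2 (x + 1 * u)) \<partial>lborel) \<partial>lborel)"
  proof (intro Bochner_Integration.integral_cong refl)
    fix x
    have "fourier g2 t = \<bar>1\<bar> *\<^sub>R (\<integral>u. exp (\<i> * complex_of_real (t * (x + 1 * u))) * g2 (x + 1 * u) \<partial>lborel)"
      unfolding fourier_def by (rule lborel_integral_real_affine) simp
    then show "cnj (exp (\<i> * complex_of_real (t * x)) * g1 x) * fourier g2 t
      = (\<integral>u. cnj (exp (\<i> * complex_of_real (t * x)) * g1 x)
           * (exp (\<i> * complex_of_real (t * (x + 1 * u))) * g2 (x + 1 * u)) \<partial>lborel)"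
      by simp
  qed
  also have "\<dots> = (\<integral>x. (\<integral>u. exp (\<i> * complex_of_real (t * u)) * (cnj (g1 x) * g2 (x + u)) \<partial>lborel) \<partial>lborel)"
  proof (intro Bochner_Integration.integral_cong refl)
    fix x u
    have "cnj (exp (\<i> * complex_of_real (t * x)) * g1 x) * (exp (\<i> * complex_of_real (t * (x + 1 * u))) * g2 (x + 1 * u))
        = (cnj (exp (\<i> * complex_of_real (t * x))) * exp (\<i> * complex_of_real (t * (x + u))))
          * (cnj (g1 x) * g2 (x + u))"
      by (simp only: complex_cnj_mult mult_1 ac_simps)
    then show "cnj (exp (\<i> * complex_of_real (t * x)) * g1 x) * (exp (\<i> * complex_of_real (t * (x + 1 * u))) * g2 (x + 1 * u))
        = exp (\<i> * complex_of_real (t * u)) * (cnj (g1 x) * g2 (x + u))"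
      by (simp only: phase)
  qed
  finally show ?thesis .
qed

definition correlation :: "(real \<Rightarrow> complex) \<Rightarrow> (real \<Rightarrow> complex) \<Rightarrow> real \<Rightarrow> complex" where
  "correlation g1 g2 u = (\<integral>x. cnj (g1 x) * g2 (x + u) \<partial>lborel)"

context
  fixes g1 g2 :: "real \<Rightarrow> complex" and A B :: real
  assumes cont1: "continuous_on UNIV g1" and cont2: "continuous_on UNIV g2"
    and vanish1: "\<And>x. g1 x \<noteq> 0 \<Longrightarrow> x \<in> {A..B}"
    and vanish2: "\<And>x. g2 x \<noteq> 0 \<Longrightarrow> x \<in> {A..B}"
begin

lemma correlation_eq_0: "u \<notin> {A-B..B-A} \<Longrightarrow> correlation g1 g2 u = 0"
proof -
  assume u: "u \<notin> {A-B..B-A}"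
  have "(\<lambda>x. cnj (g1 x) * g2 (x + u)) = (\<lambda>x. 0)"
    using vanish1 vanish2 u by (force simp: fun_eq_iff)
  then show ?thesis unfolding correlation_def by simp
qed

lemma isCont_correlation: "isCont (correlation g1 g2) u"
proof (rule continuous_at_sequentiallyI)
  have [measurable]: "g1 \<in> borel_measurable lborel" "g2 \<in> borel_measurable lborel"
    using cont1 cont2 by (simp_all add: borel_measurable_continuous_onI)
  obtain M2 where M2: "\<And>x. norm (g2 x) \<le> M2"
    using bounded_vanishing_outside_Icc[OF continuous_on_subset[OF cont2] vanish2] by blast
  have "integrable lborel g1"
    using integrable_vanishing_outside_Icc[OF continuous_on_subset[OF cont1] vanish1] by blast
  fix X assume X: "X \<longlonglongrightarrow> u"
  show "(\<lambda>n. correlation g1 g2 (X n)) \<longlonglongrightarrow> correlation g1 g2 u"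
    unfolding correlation_def
  proof (rule integral_dominated_convergence[where w="\<lambda>x. M2 * norm (g1 x)"])
    show "integrable lborel (\<lambda>x. M2 * norm (g1 x))" using \<open>integrable lborel g1\<close> by auto
    show "AE x in lborel. (\<lambda>n. cnj (g1 x) * g2 (x + X n)) \<longlonglongrightarrow> cnj (g1 x) * g2 (x + u)"
    proof
      fix x
      have "(\<lambda>n. g2 (x + X n)) \<longlonglongrightarrow> g2 (x + u)"
        using cont2 X by (intro isCont_tendsto_compose[where g=g2] tendsto_intros)
          (auto simp: continuous_on_eq_continuous_at)
      then show "(\<lambda>n. cnj (g1 x) * g2 (x + X n)) \<longlonglongrightarrow> cnj (g1 x) * g2 (x + u)"
        by (intro tendsto_intros)
    qed
    show "AE x in lborel. norm (cnj (g1 x) * g2 (x + X n)) \<le> M2 * norm (g1 x)" for n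
    proof (rule AE_I2)
      fix x
      show "norm (cnj (g1 x) * g2 (x + X n)) \<le> M2 * norm (g1 x)"
        using mult_left_mono[OF M2[of "x + X n"], of "norm (g1 x)"] by (simp add: norm_mult mult.commute)
    qed
  qed auto
qed

lemma fourier_correlation:
  "cnj (fourier g1 t) * fourier g2 t = fourier (correlation g1 g2) t"
proof -
  have [measurable]: "g1 \<in> borel_measurable lborel" "g2 \<in> borel_measurable lborel"
    using cont1 cont2 by (simp_all add: borel_measurable_continuous_onI)
  obtain M1 where M1: "M1 \<ge> 0" "\<And>x. norm (g1 x) \<le> M1"
    using bounded_vanishing_outside_Icc[OF continuous_on_subset[OF cont1] vanish1] by blast
  obtain M2 where M2: "M2 \<ge> 0" "\<And>x. norm (g2 x) \<le> M2"
    using bounded_vanishing_outside_Icc[OF continuous_on_subset[OF cont2] vanish2] by blast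
  have "cnj (fourier g1 t) * fourier g2 t
      = (\<integral>u. (\<integral>x. exp (\<i> * complex_of_real (t * u)) * (cnj (g1 x) * g2 (x + u)) \<partial>lborel) \<partial>lborel)"
    unfolding cnj_fourier_mult_fourier
  proof (rule Fubini_integral_product_bound[where a="\<lambda>x. M1 * indicator {A..B} x"
        and b="\<lambda>u. M2 * indicator {A-B..B-A} u"])
    show "integrable lborel (\<lambda>x. M1 * indicator {A..B} x)" "integrable lborel (\<lambda>u. M2 * indicator {A-B..B-A} u)"
      by (intro integrable_mult_right integrable_real_indicator; simp add: emeasure_lborel_Icc_eq)+
    fix x u
    show "norm (exp (\<i> * complex_of_real (t * u)) * (cnj (g1 x) * g2 (x + u)))
        \<le> M1 * indicator {A..B} x * (M2 * indicator {A-B..B-A} u)"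
    proof (cases "g1 x = 0 \<or> g2 (x + u) = 0")
      case False
      then have "x \<in> {A..B}" "u \<in> {A-B..B-A}" using vanish1[of x] vanish2[of "x+u"] by auto
      then show ?thesis using M1 M2 by (auto simp: norm_mult intro: mult_mono)
    qed (use M1 M2 in \<open>auto simp: indicator_def\<close>)
  qed measurable
  also have "\<dots> = fourier (correlation g1 g2) t"
    unfolding fourier_def correlation_def by simp
  finally show ?thesis .
qed

lemma plancherel:
  assumes int: "integrable lborel (\<lambda>t. cnj (fourier g1 t) * fourier g2 t)"
  shows "(\<integral>t. cnj (fourier g1 t) * fourier g2 t \<partial>lborel) = 2 * pi * (\<integral>x. cnj (g1 x) * g2 x \<partial>lborel)"
proof -
  have "continuous_on {A-B..B-A} (correlation g1 g2)"
    using isCont_correlation by (simp add: continuous_at_imp_continuous_on)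
  moreover have "\<And>u. correlation g1 g2 u \<noteq> 0 \<Longrightarrow> u \<in> {A-B..B-A}"
    using correlation_eq_0 by blast
  ultimately obtain M where "\<And>u. norm (correlation g1 g2 u) \<le> M"
    and "integrable lborel (correlation g1 g2)"
    using bounded_vanishing_outside_Icc integrable_vanishing_outside_Icc by metis
  then have "(\<integral>t. fourier (correlation g1 g2) t \<partial>lborel) = 2 * pi * correlation g1 g2 0"
    using isCont_correlation int fourier_correlation by (intro integral_fourier) auto
  then show ?thesis using fourier_correlation by (simp add: correlation_def)
qed

end

section \<open>Functions supported in a momentum shell\<close>

definition shell_C0 :: "real \<Rightarrow> real \<Rightarrow> (real \<Rightarrow> complex) \<Rightarrow> bool" where
  "shell_C0 a b f \<longleftrightarrow> continuous_on UNIV f \<and> (\<forall>p. f p \<noteq> 0 \<longrightarrow> a < \<bar>p\<bar> \<and> \<bar>p\<bar> < b)"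

definition shell_C1 :: "real \<Rightarrow> real \<Rightarrow> (real \<Rightarrow> complex) \<Rightarrow> (real \<Rightarrow> complex) \<Rightarrow> bool" where
  "shell_C1 a b f f' \<longleftrightarrow> (\<forall>x. (f has_vector_derivative f' x) (at x)) \<and> shell_C0 a b f \<and> shell_C0 a b f'"

lemma shell_C0_eq_0: "shell_C0 a b f \<Longrightarrow> \<not> (a < \<bar>p\<bar> \<and> \<bar>p\<bar> < b) \<Longrightarrow> f p = 0"
  unfolding shell_C0_def by blast

lemma shell_C0_vanishing_near_0: "shell_C0 a b f \<Longrightarrow> \<bar>x\<bar> \<le> a \<Longrightarrow> f x = 0"
  by (simp add: shell_C0_eq_0)

lemma shell_C0_reflect: "shell_C0 a b f \<Longrightarrow> shell_C0 a b (\<lambda>p. f (-p))"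
  unfolding shell_C0_def
  by (auto intro!: continuous_on_compose2[of UNIV f] continuous_intros)

lemma shell_C1_reflect: "shell_C1 a b f f' \<Longrightarrow> shell_C1 a b (\<lambda>p. f (-p)) (\<lambda>p. - f' (-p))"
proof -
  assume C1: "shell_C1 a b f f'"
  have "((\<lambda>p. f (-p)) has_vector_derivative - f' (-x)) (at x)" for x
  proof -
    have "((\<lambda>p::real. -p) has_vector_derivative -1) (at x)"
      unfolding has_real_derivative_iff_has_vector_derivative[symmetric]
      by (auto intro!: derivative_eq_intros)
    from vector_diff_chain_at[OF this] show ?thesis
      using C1 unfolding shell_C1_def by (simp add: o_def) blast
  qed
  moreover have "shell_C0 a b (\<lambda>p. - f' (-p))"
    using shell_C0_reflect[of a b f'] C1 unfolding shell_C1_def shell_C0_def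
    by (auto intro: continuous_intros)
  ultimately show ?thesis using C1 shell_C0_reflect unfolding shell_C1_def by blast
qed

lemma has_vector_derivative_vanishing_near_0:
  assumes "\<And>x. \<bar>x\<bar> \<le> a \<Longrightarrow> g x = 0" and "a > 0"
  shows "(g has_vector_derivative 0) (at 0)"
  by (rule has_vector_derivative_transform_within_open[of "\<lambda>_. 0" 0 0 "ball 0 a"])
     (use assms in \<open>auto simp: dist_real_def\<close>)

lemma has_vector_derivative_scaleR_vanishing_near_0:
  fixes g :: "real \<Rightarrow> complex"
  assumes g: "\<And>x. (g has_vector_derivative g' x) (at x)"
    and vanish: "\<And>x. \<bar>x\<bar> \<le> a \<Longrightarrow> g x = 0" and a: "a > 0"
    and r: "\<And>x. x \<noteq> 0 \<Longrightarrow> (r has_real_derivative r' x) (at x)"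
  shows "((\<lambda>p. r p *\<^sub>R g p) has_vector_derivative (r x *\<^sub>R g' x + r' x *\<^sub>R g x)) (at x)"
proof (cases "x = 0")
  case True
  have "g' 0 = 0"
    using vector_derivative_unique_at[OF g has_vector_derivative_vanishing_near_0[OF vanish a]] .
  moreover have "((\<lambda>p. r p *\<^sub>R g p) has_vector_derivative 0) (at 0)"
    using vanish a by (intro has_vector_derivative_vanishing_near_0) auto
  ultimately show ?thesis using True vanish[of 0] a by simp
qed (intro has_vector_derivative_scaleR r g)

lemma continuous_on_scaleR_vanishing_near_0:
  fixes g :: "real \<Rightarrow> complex"
  assumes g: "continuous_on UNIV g" and vanish: "\<And>x. \<bar>x\<bar> \<le> a \<Longrightarrow> g x = 0" and a: "a > 0"
    and r: "continuous_on (-{0}) r"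
  shows "continuous_on UNIV (\<lambda>p. r p *\<^sub>R g p)"
proof -
  have "continuous_on (-{0}) (\<lambda>p. r p *\<^sub>R g p)"
    by (intro continuous_intros r continuous_on_subset[OF g]) auto
  moreover have "continuous_on (ball 0 a) (\<lambda>p. r p *\<^sub>R g p)"
    using vanish by (subst continuous_on_cong[OF refl, of _ _ "\<lambda>_. 0"]) (auto simp: dist_real_def)
  moreover have "- {0} \<union> ball 0 a = (UNIV::real set)" using a by auto
  ultimately show ?thesis
    using continuous_on_open_Un[of "-{0}" "ball 0 a"] by force
qed

lemma shell_C0_scaleR:
  assumes g: "shell_C0 a b g" and a: "a > 0" and r: "continuous_on (-{0}) r"
  shows "shell_C0 a b (\<lambda>p. r p *\<^sub>R g p)"
proof -
  have "continuous_on UNIV (\<lambda>p. r p *\<^sub>R g p)"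
    using g by (intro continuous_on_scaleR_vanishing_near_0[OF _ shell_C0_vanishing_near_0[OF g] a r])
      (simp add: shell_C0_def)
  then show ?thesis using g unfolding shell_C0_def by simp
qed

lemma shell_C0_add: "shell_C0 a b u \<Longrightarrow> shell_C0 a b v \<Longrightarrow> shell_C0 a b (\<lambda>p. u p + v p)"
  unfolding shell_C0_def by (metis add.right_neutral continuous_on_add)

lemma shell_C0_linear_combination:
  "shell_C0 a b u \<Longrightarrow> shell_C0 a b v \<Longrightarrow> shell_C0 a b (\<lambda>p. c * (u p - v p))"
  unfolding shell_C0_def by (metis continuous_on_diff continuous_on_mult_left diff_self mult_zero_right)

lemma shell_C1_scaleR:
  assumes g: "shell_C1 a b g g'" and a: "a > 0"
    and r: "\<And>x. x \<noteq> 0 \<Longrightarrow> (r has_real_derivative r' x) (at x)" and r': "continuous_on (-{0}) r'"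
  shows "shell_C1 a b (\<lambda>p. r p *\<^sub>R g p) (\<lambda>p. r p *\<^sub>R g' p + r' p *\<^sub>R g p)"
proof -
  have C0: "shell_C0 a b g" "shell_C0 a b g'" and g_deriv: "\<And>x. (g has_vector_derivative g' x) (at x)"
    using g unfolding shell_C1_def by auto
  have "continuous_on (-{0}) r"
    using r by (intro continuous_at_imp_continuous_on ballI DERIV_isCont) auto
  then have "shell_C0 a b (\<lambda>p. r p *\<^sub>R g p)" "shell_C0 a b (\<lambda>p. r p *\<^sub>R g' p + r' p *\<^sub>R g p)"
    using C0 a r' by (auto intro!: shell_C0_add shell_C0_scaleR)
  moreover have "((\<lambda>p. r p *\<^sub>R g p) has_vector_derivative (r x *\<^sub>R g' x + r' x *\<^sub>R g x)) (at x)" for x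
    using has_vector_derivative_scaleR_vanishing_near_0[OF g_deriv shell_C0_vanishing_near_0[OF C0(1)] a r] .
  ultimately show ?thesis unfolding shell_C1_def by blast
qed

lemma shell_C1_linear_combination:
  assumes "shell_C1 a b u u'" "shell_C1 a b v v'"
  shows "shell_C1 a b (\<lambda>p. c * (u p - v p)) (\<lambda>p. c * (u' p - v' p))"
  using assms unfolding shell_C1_def
  by (metis has_vector_derivative_diff has_vector_derivative_mult_right shell_C0_linear_combination)

lemma derivatives_vanish_on_open:
  fixes D :: "nat \<Rightarrow> real \<Rightarrow> complex"
  assumes U: "open U" and D0: "\<And>x. x \<in> U \<Longrightarrow> D 0 x = 0"
    and D: "\<And>n x. (D n has_vector_derivative D (Suc n) x) (at x)"
  shows "x \<in> U \<Longrightarrow> D n x = 0"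
proof (induction n arbitrary: x)
  case (Suc n)
  have "(D n has_vector_derivative 0) (at x)"
    by (rule has_vector_derivative_transform_within_open[of "\<lambda>_. 0" 0 x U]) (use Suc U in auto)
  then show ?case using vector_derivative_unique_at[OF D[of n x]] by simp
qed (use D0 in simp)

lemma domT_shell_C1:
  assumes "\<phi> \<in> domT"
  obtains a b f' f'' where "0 < a" "a < b" "shell_C1 a b \<phi> f'" "shell_C1 a b f' f''"
proof -
  obtain D where D0: "D 0 = \<phi>" and D: "\<And>n x. (D n has_vector_derivative D (Suc n) x) (at x)"
    using assms unfolding domT_def smooth_fun_def by blast
  have S: "compact (supp_cl \<phi>)" "0 \<notin> supp_cl \<phi>" using assms unfolding domT_def by auto
  obtain R where R: "\<And>x. x \<in> supp_cl \<phi> \<Longrightarrow> \<bar>x\<bar> \<le> R" and "R \<ge> 0"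
    using compact_imp_bounded[OF S(1)] bounded_real by (metis abs_ge_zero order.trans)
  obtain \<delta> where \<delta>: "\<delta> > 0" "ball 0 \<delta> \<subseteq> - supp_cl \<phi>"
    using open_contains_ball compact_imp_closed[OF S(1)] S(2) by (metis ComplI open_Compl)
  define U where "U = {x::real. \<bar>x\<bar> < \<delta>} \<union> {x. \<bar>x\<bar> > R}"
  have "open U" unfolding U_def by (intro open_Un open_Collect_less continuous_intros)
  moreover have "\<phi> x = 0" if "x \<in> U" for x
  proof (rule ccontr)
    assume "\<phi> x \<noteq> 0"
    then have "x \<in> supp_cl \<phi>" unfolding supp_cl_def by (simp add: closure_def)
    then show False using that R \<delta> unfolding U_def by (force simp: dist_real_def)
  qed
  ultimately have vanish: "D n x = 0" if "x \<in> U" for n x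
    using derivatives_vanish_on_open[of U D, OF _ _ D that] D0 by blast
  have "shell_C0 (\<delta>/2) (R + \<delta>) (D n)" for n
    unfolding shell_C0_def
  proof
    show "continuous_on UNIV (D n)"
      using D by (intro continuous_at_imp_continuous_on ballI has_vector_derivative_continuous) auto
    show "\<forall>p. D n p \<noteq> 0 \<longrightarrow> \<delta>/2 < \<bar>p\<bar> \<and> \<bar>p\<bar> < R + \<delta>"
      using vanish \<delta>(1) unfolding U_def by force
  qed
  then have "shell_C1 (\<delta>/2) (R + \<delta>) (D n) (D (Suc n))" for n
    using D unfolding shell_C1_def by blast
  from this[of 0] this[of 1] \<delta>(1) \<open>R \<ge> 0\<close> show ?thesis
    by (intro that[of "\<delta>/2" "R + \<delta>" "D 1" "D 2"]) (simp_all add: D0 numeral_2_eq_2)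
qed

text \<open>At \<open>p = 0\<close> both sides are \<open>0\<close>: the left because \<open>f\<close> vanishes near \<open>0\<close>, the right
  because \<open>1 / 0 = 0\<close>.\<close>
lemma opT_eq:
  assumes f: "\<And>x. (f has_vector_derivative f' x) (at x)" and vanish: "\<And>x. \<bar>x\<bar> \<le> a \<Longrightarrow> f x = 0"
    and a: "a > 0"
  shows "opT f = (\<lambda>p. \<i> * ((1 / p) *\<^sub>R f' p - (1 / (2 * p^2)) *\<^sub>R f p))"
proof
  fix p
  have "((\<lambda>x. (1 / (2 * x)) *\<^sub>R f x) has_vector_derivative
      ((1 / (2 * p)) *\<^sub>R f' p + (- (1 / (2 * p^2))) *\<^sub>R f p)) (at p)"
    by (rule has_vector_derivative_scaleR_vanishing_near_0[OF f vanish a])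
      (auto intro!: derivative_eq_intros simp: field_simps power2_eq_square)
  then have vd: "vector_derivative (\<lambda>x. complex_of_real (1 / (2 * x)) * f x) (at p)
      = (1 / (2 * p)) *\<^sub>R f' p + (- (1 / (2 * p^2))) *\<^sub>R f p"
    by (intro vector_derivative_at) (simp add: scaleR_conv_of_real)
  then show "opT f p = \<i> * ((1 / p) *\<^sub>R f' p - (1 / (2 * p^2)) *\<^sub>R f p)"
    unfolding opT_def vd vector_derivative_at[OF f]
    by (simp add: scaleR_conv_of_real field_simps)
qed

lemma opT_eq_shell:
  assumes "shell_C1 a b f f'" and "a > 0"
  shows "opT f = (\<lambda>p. \<i> * ((1 / p) *\<^sub>R f' p - (1 / (2 * p^2)) *\<^sub>R f p))"
  using assms unfolding shell_C1_def by (intro opT_eq[OF _ shell_C0_vanishing_near_0 \<open>a > 0\<close>]) auto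

lemma opT_reflect:
  assumes "shell_C1 a b f f'" and "a > 0"
  shows "opT (\<lambda>p. f (-p)) = (\<lambda>p. opT f (-p))"
  using opT_eq_shell[OF assms] opT_eq_shell[OF shell_C1_reflect[OF assms(1)] assms(2)]
  by (simp add: divide_simps)

lemma shell_C0_opT:
  assumes f: "shell_C1 a b f f'" and a: "a > 0"
  shows "shell_C0 a b (opT f)"
proof -
  have "continuous_on (-{0}) (\<lambda>p::real. 1 / p)" "continuous_on (-{0}) (\<lambda>p::real. 1 / (2 * p^2))"
    by (auto intro!: continuous_intros)
  then show ?thesis
    using f a unfolding opT_eq_shell[OF f a] shell_C1_def
    by (intro shell_C0_linear_combination shell_C0_scaleR) auto
qed

lemma shell_C1_opT:
  assumes f: "shell_C1 a b f f'" and f': "shell_C1 a b f' f''" and a: "a > 0"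
  shows "\<exists>g. shell_C1 a b (opT f) g"
proof -
  have "shell_C1 a b (\<lambda>p. (1 / p) *\<^sub>R f' p) (\<lambda>p. (1 / p) *\<^sub>R f'' p + (- 1 / p^2) *\<^sub>R f' p)"
    by (rule shell_C1_scaleR[OF f' a])
      (auto intro!: derivative_eq_intros continuous_intros simp: field_simps power2_eq_square)
  moreover have "shell_C1 a b (\<lambda>p. (1 / (2 * p^2)) *\<^sub>R f p) (\<lambda>p. (1 / (2 * p^2)) *\<^sub>R f' p + (- 1 / p^3) *\<^sub>R f p)"
    by (rule shell_C1_scaleR[OF f a])
      (auto intro!: derivative_eq_intros continuous_intros simp: field_simps power2_eq_square power3_eq_cube)
  ultimately show ?thesis
    unfolding opT_eq_shell[OF f a] by (blast dest: shell_C1_linear_combination)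
qed

section \<open>The transform \<open>\<phi>(t, \<alpha>)\<close>\<close>

lemma norm_psi_le: "norm (psi t \<alpha> p) \<le> sqrt \<bar>p\<bar>"
proof -
  have "norm (psi t \<alpha> p) = 1 / sqrt (2 * pi) * heaviside (\<alpha> * p) * sqrt \<bar>p\<bar>"
    unfolding psi_def norm_mult by (simp add: heaviside_def norm_divide)
  also have "\<dots> \<le> 1 * 1 * sqrt \<bar>p\<bar>"
    using pi_ge_two by (intro mult_right_mono mult_mono) (auto simp: heaviside_def)
  finally show ?thesis by simp
qed

lemma cnj_psi_nonneg:
  "p \<ge> 0 \<Longrightarrow> cnj (psi t 1 p) = complex_of_real (sqrt p / sqrt (2*pi)) * exp (\<i> * complex_of_real (t * p^2 / 2))"
  by (simp add: psi_def heaviside_def exp_cnj)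

lemma continuous_on_cnj_psi_nonneg: "continuous_on {0..} (\<lambda>p. cnj (psi t 1 p))"
proof -
  have "continuous_on {0..} (\<lambda>p. complex_of_real (sqrt p / sqrt (2*pi)) * exp (\<i> * complex_of_real (t * p^2 / 2)))"
    by (intro continuous_intros) auto
  then show ?thesis by (rule continuous_on_eq) (simp add: cnj_psi_nonneg)
qed

lemma borel_measurable_phi_trans [measurable]:
  assumes [measurable]: "f \<in> borel_measurable lborel"
  shows "(\<lambda>t. phi_trans f t \<alpha>) \<in> borel_measurable lborel"
  unfolding phi_trans_def psi_def heaviside_def by measurable

lemma norm_phi_trans_le:
  assumes [measurable]: "f \<in> borel_measurable lborel"
    and int: "integrable lborel (\<lambda>p. sqrt \<bar>p\<bar> * norm (f p))"
  shows "norm (phi_trans f t \<alpha>) \<le> (\<integral>p. sqrt \<bar>p\<bar> * norm (f p) \<partial>lborel)"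
proof -
  have bound: "norm (cnj (psi t \<alpha> p) * f p) \<le> sqrt \<bar>p\<bar> * norm (f p)" for p
    unfolding norm_mult complex_mod_cnj by (intro mult_right_mono norm_psi_le) simp
  have "(\<lambda>p. cnj (psi t \<alpha> p) * f p) \<in> borel_measurable lborel"
    unfolding psi_def heaviside_def by measurable
  then have "integrable lborel (\<lambda>p. cnj (psi t \<alpha> p) * f p)"
    by (rule Bochner_Integration.integrable_bound[OF int])
      (intro AE_I2, simp only: real_norm_def, rule order_trans[OF bound abs_ge_self])
  then show ?thesis
    unfolding phi_trans_def by (rule Bochner_Integration.integral_norm_bound_integral[OF _ int bound])
qed

lemma phi_trans_bounded:
  assumes f: "shell_C0 a b f"
  obtains C where "\<And>t \<alpha>. norm (phi_trans f t \<alpha>) \<le> C"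
proof -
  have cont: "continuous_on UNIV f" using f unfolding shell_C0_def by blast
  then have [measurable]: "f \<in> borel_measurable lborel"
    by (simp add: borel_measurable_continuous_onI)
  have "integrable lborel (\<lambda>p. sqrt \<bar>p\<bar> * norm (f p))"
  proof (rule integrable_vanishing_outside_Icc)
    show "continuous_on {-b..b} (\<lambda>p. sqrt \<bar>p\<bar> * norm (f p))"
      by (intro continuous_intros continuous_on_subset[OF cont]) auto
    show "p \<in> {-b..b}" if "sqrt \<bar>p\<bar> * norm (f p) \<noteq> 0" for p
      using that f unfolding shell_C0_def by force
  qed
  from norm_phi_trans_le[OF _ this] show ?thesis
    by (rule that) measurable
qed

lemma phi_trans_reflect: "phi_trans f t (-1) = phi_trans (\<lambda>p. f (-p)) t 1"
  unfolding phi_trans_def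
  by (subst lborel_integral_real_affine[where c="-1" and t=0]) (simp_all add: psi_def)

lemma phi_trans_eq_integral_shell:
  assumes f: "shell_C0 a b f" and a: "a > 0"
  shows "phi_trans f t 1 = integral {a..b} (\<lambda>p. cnj (psi t 1 p) * f p)"
  unfolding phi_trans_def
proof (rule integral_vanishing_outside_Icc)
  have "continuous_on {a..b} f" using f unfolding shell_C0_def by (blast intro: continuous_on_subset)
  then have cont: "continuous_on {a..b} (\<lambda>p. complex_of_real (sqrt p / sqrt (2*pi)) * exp (\<i> * complex_of_real (t * p^2 / 2)) * f p)"
    by (intro continuous_intros) auto
  have eq: "\<And>p. p \<in> {a..b} \<Longrightarrow> cnj (psi t 1 p) * f p
      = complex_of_real (sqrt p / sqrt (2*pi)) * exp (\<i> * complex_of_real (t * p^2 / 2)) * f p"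
    using a by (simp add: cnj_psi_nonneg)
  show "continuous_on {a..b} (\<lambda>p. cnj (psi t 1 p) * f p)"
    using cont by (subst continuous_on_cong[OF refl eq]) assumption+
  fix p assume "cnj (psi t 1 p) * f p \<noteq> 0"
  then have "f p \<noteq> 0" "p \<ge> 0" by (auto simp: psi_def heaviside_def split: if_splits)
  moreover have "f p \<noteq> 0 \<Longrightarrow> a < \<bar>p\<bar> \<and> \<bar>p\<bar> < b" using f unfolding shell_C0_def by blast
  ultimately show "p \<in> {a..b}" by auto
qed

lemma has_vector_derivative_exp_quadratic_phase:
  "((\<lambda>p. exp (\<i> * complex_of_real (t * p^2 / 2))) has_vector_derivative
      (\<i> * complex_of_real (t * p)) * exp (\<i> * complex_of_real (t * p^2 / 2))) (at p within S)"
proof -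
  have "((\<lambda>p. t * p^2 / 2) has_vector_derivative (t * p)) (at p within S)"
    unfolding has_real_derivative_iff_has_vector_derivative[symmetric]
    by (auto intro!: derivative_eq_intros)
  from vector_diff_chain_within[OF this has_vector_derivative_iexp] show ?thesis
    by (simp add: o_def scaleR_conv_of_real mult_ac)
qed

lemma has_vector_derivative_boundary_term:
  assumes f: "(f has_vector_derivative f') (at p within S)" and p: "p > 0"
  shows "((\<lambda>x. exp (\<i> * complex_of_real (t * x^2 / 2)) * ((sqrt x / x) *\<^sub>R f x)) has_vector_derivative
      exp (\<i> * complex_of_real (t * p^2 / 2)) * ((sqrt p / p) *\<^sub>R f' + (- (sqrt p / (2 * p^2))) *\<^sub>R f p)
      + (\<i> * complex_of_real (t * p)) * exp (\<i> * complex_of_real (t * p^2 / 2)) * ((sqrt p / p) *\<^sub>R f p))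
    (at p within S)"
proof -
  have "((\<lambda>x. sqrt x / x) has_real_derivative - (sqrt p / (2 * p^2))) (at p within S)"
    using p by (auto intro!: derivative_eq_intros simp: field_simps power2_eq_square)
  from has_vector_derivative_mult[OF has_vector_derivative_exp_quadratic_phase
      has_vector_derivative_scaleR[OF this f]]
  show ?thesis .
qed

text \<open>
  Integration by parts against the boundary term \<open>e(p) f(p) / \<surd>p\<close>, which vanishes at
  \<open>a\<close> and \<open>b\<close>: the kernel \<open>\<surd>p e(p)\<close> of \<open>\<phi>(t, 1)\<close> is a generalised eigenfunction of \<open>T\<close>.
\<close>
lemma integral_sqrt_phase_opT:
  fixes t :: real
  assumes f: "shell_C1 a b f f'" and a: "0 < a"
  defines "e \<equiv> \<lambda>p. exp (\<i> * complex_of_real (t * p^2 / 2))"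
  shows "integral {a..b} (\<lambda>p. complex_of_real (sqrt p) * e p * opT f p)
    = t * integral {a..b} (\<lambda>p. complex_of_real (sqrt p) * e p * f p)"
proof (cases "a \<le> b")
  case ab: True
  have f_deriv: "\<And>x. (f has_vector_derivative f' x) (at x)" and C0: "shell_C0 a b f"
    using f unfolding shell_C1_def by auto
  define F where "F p = e p * ((sqrt p / p) *\<^sub>R f p)" for p
  define F' where "F' p = e p * ((sqrt p / p) *\<^sub>R f' p + (- (sqrt p / (2 * p^2))) *\<^sub>R f p)
      + (\<i> * complex_of_real (t * p)) * e p * ((sqrt p / p) *\<^sub>R f p)" for p
  define K where "K p = complex_of_real (sqrt p) * e p * f p" for p
  have "(F has_vector_derivative F' p) (at p within {a..b})" if "p \<in> {a..b}" for p
    unfolding F_def F'_def e_def using that a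
    by (intro has_vector_derivative_boundary_term has_vector_derivative_at_within[OF f_deriv]) auto
  then have "(F' has_integral F b - F a) {a..b}"
    by (rule fundamental_theorem_of_calculus[OF ab])
  moreover have "F a = 0" "F b = 0"
    using shell_C0_eq_0[OF C0, of a] shell_C0_eq_0[OF C0, of b] a ab unfolding F_def by auto
  ultimately have F'_int: "(F' has_integral 0) {a..b}" by simp
  have "continuous_on {a..b} f"
    using C0 unfolding shell_C0_def by (blast intro: continuous_on_subset)
  then have "continuous_on {a..b} K"
    unfolding K_def e_def by (intro continuous_intros) auto
  then have K_int: "(K has_integral integral {a..b} K) {a..b}"
    by (intro integrable_integral integrable_continuous_interval)
  have by_parts: "complex_of_real (sqrt p) * e p * opT f p = t * K p + \<i> * F' p" if "p \<in> {a..b}" for p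
  proof -
    have "p > 0" using that a by auto
    then show ?thesis unfolding opT_eq_shell[OF f a] K_def F'_def
      by (simp add: scaleR_conv_of_real field_simps power2_eq_square)
  qed
  have "((\<lambda>p. t * K p + \<i> * F' p) has_integral t * integral {a..b} K + \<i> * 0) {a..b}"
    by (intro has_integral_add has_integral_mult_right K_int F'_int)
  then have "((\<lambda>p. complex_of_real (sqrt p) * e p * opT f p) has_integral t * integral {a..b} K) {a..b}"
    by (subst has_integral_cong[OF by_parts]) simp_all
  then show ?thesis unfolding K_def by (rule integral_unique)
qed simp

lemma phi_trans_opT_pos:
  assumes f: "shell_C1 a b f f'" and a: "a > 0"
  shows "phi_trans (opT f) t 1 = t * phi_trans f t 1"
proof -
  have C0: "shell_C0 a b f" using f unfolding shell_C1_def by blast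
  have cnj_psi: "cnj (psi t 1 p) * g p = complex_of_real (1 / sqrt (2*pi))
      * (complex_of_real (sqrt p) * exp (\<i> * complex_of_real (t * p^2 / 2)) * g p)"
    if "p \<in> {a..b}" for p g
    using that a by (simp add: cnj_psi_nonneg)
  show ?thesis
    unfolding phi_trans_eq_integral_shell[OF shell_C0_opT[OF f a] a] phi_trans_eq_integral_shell[OF C0 a]
    by (simp only: cnj_psi integral_mult_right integral_sqrt_phase_opT[OF f a] mult.left_commute
        cong: Henstock_Kurzweil_Integration.integral_cong)
qed

lemma phi_trans_opT:
  assumes f: "shell_C1 a b f f'" and a: "a > 0" and \<alpha>: "\<alpha> \<in> {1, -1}"
  shows "phi_trans (opT f) t \<alpha> = t * phi_trans f t \<alpha>"
  using \<alpha> phi_trans_opT_pos[OF f a] phi_trans_opT_pos[OF shell_C1_reflect[OF f] a]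
  by (auto simp: phi_trans_reflect opT_reflect[OF f a])

lemma has_integral_sqrt_substitution:
  fixes k :: "real \<Rightarrow> complex"
  assumes a: "0 < a" "a \<le> b" and k: "continuous_on {a..b} k"
  shows "((\<lambda>E. (1 / sqrt (2*E)) *\<^sub>R k (sqrt (2*E))) has_integral integral {a..b} k) {a^2/2..b^2/2}"
proof -
  have "((\<lambda>E. (1 / sqrt (2*E)) *\<^sub>R k (sqrt (2*E))) has_integral
      integral {sqrt (2*(a^2/2))..sqrt (2*(b^2/2))} k) {a^2/2..b^2/2}"
  proof (rule has_integral_substitution[where c=a and d=b, OF _ _ _ k])
    show "a^2/2 \<le> b^2/2" "sqrt (2*(a^2/2)) \<le> sqrt (2*(b^2/2))"
      using a by (simp_all add: power_mono)
    show "(\<lambda>E. sqrt (2*E)) ` {a^2/2..b^2/2} \<subseteq> {a..b}"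
    proof clarify
      fix E assume "E \<in> {a^2/2..b^2/2}"
      then have "sqrt (a^2) \<le> sqrt (2*E)" "sqrt (2*E) \<le> sqrt (b^2)"
        by (auto intro!: real_sqrt_le_mono simp del: real_sqrt_abs)
      then show "sqrt (2*E) \<in> {a..b}" using a by simp
    qed
    fix E assume "E \<in> {a^2/2..b^2/2}"
    then have "E > 0" using a by (auto intro: less_le_trans[of 0 "a^2/2"])
    then show "((\<lambda>E. sqrt (2*E)) has_real_derivative 1 / sqrt (2*E)) (at E within {a^2/2..b^2/2})"
      by (auto intro!: derivative_eq_intros simp: field_simps)
  qed
  then show ?thesis using a by simp
qed

text \<open>
  The branch \<open>p > 0\<close> of \<open>f\<close> in the energy variable \<open>E = p\<^sup>2/2\<close>, weighted so that
  \<open>\<integral> |energy_rep f E|\<^sup>2 dE = \<integral>\<^sub>0\<^sup>\<infinity> |f p|\<^sup>2 dp\<close>; in this variable the kernel of \<open>\<phi>(t, 1)\<close>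
  becomes \<open>exp (i t E)\<close>.
\<close>
definition energy_rep :: "(real \<Rightarrow> complex) \<Rightarrow> real \<Rightarrow> complex" where
  "energy_rep f E = (if E > 0 then f (sqrt (2*E)) / complex_of_real (sqrt (sqrt (2*E))) else 0)"

lemma energy_rep_vanishing:
  assumes f: "shell_C0 a b f" and a: "0 < a" and E: "energy_rep f E \<noteq> 0"
  shows "E \<in> {a^2/2..b^2/2}"
proof -
  have "E > 0" "f (sqrt (2*E)) \<noteq> 0" using E by (auto simp: energy_rep_def split: if_splits)
  then have "a < sqrt (2*E)" "sqrt (2*E) < b" using f unfolding shell_C0_def by auto
  then have "a^2 < (sqrt (2*E))^2" "(sqrt (2*E))^2 < b^2"
    using a \<open>E > 0\<close> by (intro power_strict_mono; simp)+
  then show ?thesis using \<open>E > 0\<close> by simp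
qed

lemma continuous_energy_rep:
  assumes f: "shell_C0 a b f" and a: "0 < a"
  shows "continuous_on UNIV (energy_rep f)"
proof -
  have "continuous_on {0<..} (\<lambda>E::real. sqrt (2*E))"
    by (intro continuous_intros)
  then have "continuous_on {0<..} (\<lambda>E. f (sqrt (2*E)))"
    using continuous_on_compose2[of UNIV f] f unfolding shell_C0_def by blast
  moreover have "continuous_on {0<..} (\<lambda>E. complex_of_real (sqrt (sqrt (2*E))))"
    by (intro continuous_intros)
  ultimately have "continuous_on {0<..} (\<lambda>E. f (sqrt (2*E)) / complex_of_real (sqrt (sqrt (2*E))))"
    by (rule continuous_on_divide) auto
  then have "continuous_on {0<..} (energy_rep f)"
    by (rule continuous_on_eq) (simp add: energy_rep_def)
  moreover have "continuous_on {..<a^2/2} (energy_rep f)"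
  proof (rule continuous_on_eq[OF continuous_on_const])
    fix E :: real assume "E \<in> {..<a^2/2}"
    then show "0 = energy_rep f E" using energy_rep_vanishing[OF f a, of E] by fastforce
  qed
  moreover have "{0<..} \<union> {..<a^2/2} = (UNIV :: real set)"
    using a by (auto simp: not_less intro: le_less_trans[of _ 0])
  ultimately show ?thesis
    by (metis continuous_on_open_Un open_greaterThan open_lessThan)
qed

lemma cnj_energy_rep_mult:
  assumes "E > 0"
  shows "cnj (energy_rep f1 E) * energy_rep f2 E = (1 / sqrt (2*E)) *\<^sub>R (cnj (f1 (sqrt (2*E))) * f2 (sqrt (2*E)))"
proof -
  define s where "s = sqrt (sqrt (2*E))"
  have s: "s > 0" "sqrt (2*E) = s * s" using assms by (simp_all add: s_def)
  show ?thesis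
    using assms s(1) unfolding energy_rep_def s_def[symmetric] s(2)
    by (simp add: scaleR_conv_of_real field_simps)
qed

lemma cnj_psi_energy_rep:
  assumes "E > 0"
  shows "(1 / sqrt (2*E)) *\<^sub>R (cnj (psi t 1 (sqrt (2*E))) * f (sqrt (2*E)))
    = complex_of_real (1 / sqrt (2*pi)) * (exp (\<i> * complex_of_real (t * E)) * energy_rep f E)"
proof -
  define s where "s = sqrt (sqrt (2*E))"
  have s: "s > 0" "sqrt (2*E) = s * s" using assms by (simp_all add: s_def)
  have psi: "cnj (psi t 1 (s * s)) = complex_of_real (s / sqrt (2*pi)) * exp (\<i> * complex_of_real (t * E))"
    using assms unfolding s(2)[symmetric] by (simp add: cnj_psi_nonneg s_def)
  show ?thesis
    using assms s(1) unfolding energy_rep_def s_def[symmetric] s(2) psi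
    by (simp add: scaleR_conv_of_real field_simps)
qed

lemma phi_trans_eq_fourier_energy_rep:
  assumes f: "shell_C0 a b f" and a: "0 < a" "a \<le> b"
  shows "phi_trans f t 1 = complex_of_real (1 / sqrt (2*pi)) * fourier (energy_rep f) t"
proof -
  have "continuous_on {a..b} f" using f unfolding shell_C0_def by (blast intro: continuous_on_subset)
  moreover have "continuous_on {a..b} (\<lambda>p. cnj (psi t 1 p))"
    by (rule continuous_on_subset[OF continuous_on_cnj_psi_nonneg]) (use a in auto)
  ultimately have cont: "continuous_on {a..b} (\<lambda>p. cnj (psi t 1 p) * f p)"
    by (rule continuous_on_mult[rotated])
  have "phi_trans f t 1 = integral {a..b} (\<lambda>p. cnj (psi t 1 p) * f p)"
    by (rule phi_trans_eq_integral_shell[OF f a(1)])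
  also have "\<dots> = integral {a^2/2..b^2/2}
      (\<lambda>E. (1 / sqrt (2*E)) *\<^sub>R (cnj (psi t 1 (sqrt (2*E))) * f (sqrt (2*E))))"
    by (rule integral_unique[symmetric, OF has_integral_sqrt_substitution[OF a cont]])
  also have "\<dots> = integral {a^2/2..b^2/2}
      (\<lambda>E. complex_of_real (1 / sqrt (2*pi)) * (exp (\<i> * complex_of_real (t * E)) * energy_rep f E))"
    using a by (intro Henstock_Kurzweil_Integration.integral_cong cnj_psi_energy_rep)
      (auto intro: less_le_trans[of 0 "a^2/2"])
  also have "\<dots> = (\<integral>E. complex_of_real (1 / sqrt (2*pi)) * (exp (\<i> * complex_of_real (t * E)) * energy_rep f E) \<partial>lborel)"
  proof (rule integral_vanishing_outside_Icc[symmetric])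
    show "continuous_on {a^2/2..b^2/2} (\<lambda>E. complex_of_real (1 / sqrt (2*pi)) * (exp (\<i> * complex_of_real (t * E)) * energy_rep f E))"
      by (intro continuous_intros continuous_on_subset[OF continuous_energy_rep[OF f a(1)]]) auto
  qed (use energy_rep_vanishing[OF f a(1)] in auto)
  also have "\<dots> = complex_of_real (1 / sqrt (2*pi)) * fourier (energy_rep f) t"
    unfolding fourier_def by (rule integral_mult_right_zero)
  finally show ?thesis .
qed

lemma integral_cnj_energy_rep_mult:
  assumes f1: "shell_C0 a b f1" and f2: "shell_C0 a b f2" and a: "0 < a" "a \<le> b"
  shows "(\<integral>E. cnj (energy_rep f1 E) * energy_rep f2 E \<partial>lborel) = integral {a..b} (\<lambda>p. cnj (f1 p) * f2 p)"
proof -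
  have "(\<integral>E. cnj (energy_rep f1 E) * energy_rep f2 E \<partial>lborel)
      = integral {a^2/2..b^2/2} (\<lambda>E. cnj (energy_rep f1 E) * energy_rep f2 E)"
    by (rule integral_vanishing_outside_Icc)
      (auto intro!: continuous_intros continuous_on_subset[OF continuous_energy_rep[OF f1 a(1)]]
        continuous_on_subset[OF continuous_energy_rep[OF f2 a(1)]] dest: energy_rep_vanishing[OF f1 a(1)])
  also have "\<dots> = integral {a^2/2..b^2/2} (\<lambda>E. (1 / sqrt (2*E)) *\<^sub>R (cnj (f1 (sqrt (2*E))) * f2 (sqrt (2*E))))"
    using a by (intro Henstock_Kurzweil_Integration.integral_cong cnj_energy_rep_mult)
      (auto intro: less_le_trans[of 0 "a^2/2"])
  also have "\<dots> = integral {a..b} (\<lambda>p. cnj (f1 p) * f2 p)"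
  proof (rule integral_unique[OF has_integral_sqrt_substitution[OF a]])
    show "continuous_on {a..b} (\<lambda>p. cnj (f1 p) * f2 p)"
      using f1 f2 unfolding shell_C0_def by (intro continuous_intros) (auto intro: continuous_on_subset)
  qed
  finally show ?thesis .
qed

lemma integral_phi_trans_pos_product:
  assumes f1: "shell_C0 a b f1" and f2: "shell_C0 a b f2" and a: "0 < a" "a \<le> b"
    and int: "integrable lborel (\<lambda>t. cnj (phi_trans f1 t 1) * phi_trans f2 t 1)"
  shows "(\<integral>t. cnj (phi_trans f1 t 1) * phi_trans f2 t 1 \<partial>lborel) = integral {a..b} (\<lambda>p. cnj (f1 p) * f2 p)"
proof -
  define g1 where "g1 = energy_rep f1"
  define g2 where "g2 = energy_rep f2"
  note g_cont = continuous_energy_rep[OF f1 a(1), folded g1_def] continuous_energy_rep[OF f2 a(1), folded g2_def]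
  note g_vanish = energy_rep_vanishing[OF f1 a(1), folded g1_def] energy_rep_vanishing[OF f2 a(1), folded g2_def]
  have c: "cnj (complex_of_real (1 / sqrt (2*pi))) * complex_of_real (1 / sqrt (2*pi)) = complex_of_real (1 / (2*pi))"
    by (simp flip: of_real_mult)
  have prod: "cnj (phi_trans f1 t 1) * phi_trans f2 t 1 = complex_of_real (1 / (2*pi)) * (cnj (fourier g1 t) * fourier g2 t)" for t
    unfolding phi_trans_eq_fourier_energy_rep[OF f1 a] phi_trans_eq_fourier_energy_rep[OF f2 a]
      g1_def[symmetric] g2_def[symmetric] c[symmetric] complex_cnj_mult
    by (simp only: ac_simps)
  have "integrable lborel (\<lambda>t. complex_of_real (2*pi) * (cnj (phi_trans f1 t 1) * phi_trans f2 t 1))"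
    using int by (rule integrable_mult_right)
  then have int_fourier: "integrable lborel (\<lambda>t. cnj (fourier g1 t) * fourier g2 t)"
    unfolding prod by (simp add: mult.assoc[symmetric] flip: of_real_mult)
  have "(\<integral>t. cnj (phi_trans f1 t 1) * phi_trans f2 t 1 \<partial>lborel)
      = complex_of_real (1 / (2*pi)) * (\<integral>t. cnj (fourier g1 t) * fourier g2 t \<partial>lborel)"
    unfolding prod by (rule integral_mult_right_zero)
  also have "\<dots> = (\<integral>E. cnj (g1 E) * g2 E \<partial>lborel)"
    using plancherel[OF g_cont g_vanish int_fourier] by simp
  finally show ?thesis
    unfolding g1_def g2_def integral_cnj_energy_rep_mult[OF f1 f2 a] .
qed

lemma phi_trans_parseval:
  assumes f1: "shell_C0 a b f1" and f2: "shell_C0 a b f2" and a: "0 < a" "a \<le> b"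
    and int: "\<And>\<alpha>. \<alpha> \<in> {1, -1} \<Longrightarrow> integrable lborel (\<lambda>t. cnj (phi_trans f1 t \<alpha>) * phi_trans f2 t \<alpha>)"
  shows "(\<Sum>\<alpha>\<in>{1, -1::real}. \<integral>t. cnj (phi_trans f1 t \<alpha>) * phi_trans f2 t \<alpha> \<partial>lborel) = inner_L2 f1 f2"
proof -
  define k where "k p = cnj (f1 p) * f2 p" for p
  have k_cont: "continuous_on UNIV k"
    using f1 f2 unfolding k_def shell_C0_def by (intro continuous_intros) auto
  have k_vanish: "k p = 0" if "\<not> (a < \<bar>p\<bar> \<and> \<bar>p\<bar> < b)" for p
    using shell_C0_eq_0[OF f1 that] unfolding k_def by simp
  have k_int: "k integrable_on {x..y}" for x y
    by (rule integrable_continuous_interval, rule continuous_on_subset[OF k_cont]) auto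
  have "(\<Sum>\<alpha>\<in>{1, -1::real}. \<integral>t. cnj (phi_trans f1 t \<alpha>) * phi_trans f2 t \<alpha> \<partial>lborel)
      = integral {a..b} k + integral {a..b} (\<lambda>p. k (-p))"
    using integral_phi_trans_pos_product[OF f1 f2 a int]
      integral_phi_trans_pos_product[OF shell_C0_reflect[OF f1] shell_C0_reflect[OF f2] a]
      int[of "-1"] unfolding k_def by (simp add: phi_trans_reflect)
  also have "\<dots> = integral {-b..-a} k + integral {-a..a} k + integral {a..b} k"
  proof -
    have "integral {-a..a} k = 0"
      using k_vanish by (subst Henstock_Kurzweil_Integration.integral_cong[of _ _ "\<lambda>_. 0"]) force+
    then show ?thesis
      using Henstock_Kurzweil_Integration.integral_reflect_real[of b a "\<lambda>p. k (-p)"] by simp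
  qed
  also have "\<dots> = integral {-b..b} k"
    using a k_int by (simp add: Henstock_Kurzweil_Integration.integral_combine)
  also have "\<dots> = inner_L2 f1 f2"
    unfolding inner_L2_def k_def[symmetric]
  proof (rule integral_vanishing_outside_Icc[symmetric])
    show "continuous_on {-b..b} k" using k_cont by (rule continuous_on_subset) simp
    show "p \<in> {-b..b}" if "k p \<noteq> 0" for p
      using k_vanish[of p] that by fastforce
  qed
  finally show ?thesis .
qed

section \<open>Moments of \<open>\<tau>\<close>\<close>

lemma abs_power_le_1_plus_square:
  fixes t :: real
  assumes "k \<le> 2"
  shows "\<bar>t ^ k\<bar> \<le> 1 + t^2"
proof -
  have "\<bar>t\<bar> \<le> 1 + t^2"
    by (metis abs_le_square_iff abs_power2 abs_square_le_1 add_increasing add_increasing2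
        linorder_le_cases one_add_one self_le_power zero_le_one zero_le_power2 zero_less_two)
  moreover have "k = 0 \<or> k = 1 \<or> k = 2" using assms by auto
  ultimately show ?thesis by (elim disjE) simp_all
qed

lemma integrable_moment_of_decay:
  fixes F :: "real \<Rightarrow> complex"
  assumes [measurable]: "F \<in> borel_measurable lborel"
    and decay: "\<And>t. (1 + t^2) * norm (F t) \<le> K" and k: "k \<le> 2"
  shows "integrable lborel (\<lambda>t. t^k * (norm (F t))^2)"
proof (rule Bochner_Integration.integrable_bound)
  show "integrable lborel (\<lambda>t. K^2 * inverse (1 + t^2))"
    using integrable_inverse_1_plus_square unfolding set_integrable_def by simp
  have "norm (F 0) \<le> K" using decay[of 0] by simp
  then have "K \<ge> 0" using norm_ge_zero order_trans by blast
  show "AE t in lborel. norm (t^k * (norm (F t))^2) \<le> norm (K^2 * inverse (1 + t^2))"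
  proof (rule AE_I2)
    fix t :: real
    have pos: "1 + t^2 > 0" by (simp add: add_pos_nonneg)
    have F_le: "norm (F t) \<le> K * inverse (1 + t^2)"
      using decay[of t] pos by (simp add: field_simps)
    have "norm (t^k * (norm (F t))^2) \<le> ((1 + t^2) * norm (F t)) * norm (F t)"
      using mult_right_mono[OF abs_power_le_1_plus_square[OF k, of t], of "norm (F t) * norm (F t)"]
      by (simp add: abs_mult power2_eq_square mult.assoc)
    also have "\<dots> \<le> K * (K * inverse (1 + t^2))"
      using decay[of t] F_le \<open>K \<ge> 0\<close> by (intro mult_mono) auto
    finally show "norm (t^k * (norm (F t))^2) \<le> norm (K^2 * inverse (1 + t^2))"
      using \<open>K \<ge> 0\<close> pos by (simp add: power2_eq_square)
  qed
qed measurable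

definition tau_density :: "(real \<Rightarrow> complex) \<Rightarrow> real \<Rightarrow> real" where
  "tau_density f t = (\<Sum>\<alpha>\<in>{1, -1::real}. (cmod (phi_trans f t \<alpha>))\<^sup>2)"

lemma domT_opT_powers:
  assumes "\<phi> \<in> domT"
  obtains a b where "0 < a" "a \<le> b"
    "\<And>j. j \<le> 2 \<Longrightarrow> shell_C0 a b ((opT ^^ j) \<phi>)"
    "\<And>j t \<alpha>. j \<le> 2 \<Longrightarrow> \<alpha> \<in> {1, -1} \<Longrightarrow> phi_trans ((opT ^^ j) \<phi>) t \<alpha> = t ^ j * phi_trans \<phi> t \<alpha>"
proof -
  obtain a b f' f'' where a: "0 < a" "a < b" and C1: "shell_C1 a b \<phi> f'" "shell_C1 a b f' f''"
    using domT_shell_C1[OF assms] .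
  obtain g where C1_opT: "shell_C1 a b (opT \<phi>) g"
    using shell_C1_opT[OF C1 a(1)] by blast
  have j_cases: "j = 0 \<or> j = 1 \<or> j = 2" if "j \<le> 2" for j :: nat
    using that by auto
  show ?thesis
  proof (rule that[OF a(1) less_imp_le[OF a(2)]])
    show "shell_C0 a b ((opT ^^ j) \<phi>)" if "j \<le> 2" for j
      using j_cases[OF that] C1(1) shell_C0_opT[OF C1(1) a(1)] shell_C0_opT[OF C1_opT a(1)]
      by (auto simp: shell_C1_def numeral_2_eq_2)
    show "phi_trans ((opT ^^ j) \<phi>) t \<alpha> = t ^ j * phi_trans \<phi> t \<alpha>" if "j \<le> 2" "\<alpha> \<in> {1, -1}" for j t \<alpha>
      using j_cases[OF that(1)] phi_trans_opT[OF C1(1) a(1) that(2)] phi_trans_opT[OF C1_opT a(1) that(2)]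
      by (auto simp: numeral_2_eq_2 power2_eq_square)
  qed
qed

lemma integrable_moment_phi_trans:
  assumes \<phi>: "\<phi> \<in> domT" and k: "k \<le> 2" and \<alpha>: "\<alpha> \<in> {1, -1}"
  shows "integrable lborel (\<lambda>t. t ^ k * (cmod (phi_trans \<phi> t \<alpha>))\<^sup>2)"
proof -
  obtain a b where C0: "\<And>j. j \<le> 2 \<Longrightarrow> shell_C0 a b ((opT ^^ j) \<phi>)"
    and eigen: "\<And>j t. j \<le> 2 \<Longrightarrow> phi_trans ((opT ^^ j) \<phi>) t \<alpha> = t ^ j * phi_trans \<phi> t \<alpha>"
    using domT_opT_powers[OF \<phi>] \<alpha> by metis
  have C0_\<phi>: "shell_C0 a b \<phi>" using C0[of 0] by simp
  then have [measurable]: "\<phi> \<in> borel_measurable lborel"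
    by (simp add: shell_C0_def borel_measurable_continuous_onI)
  obtain C where C: "\<And>t. norm (phi_trans \<phi> t \<alpha>) \<le> C"
    using phi_trans_bounded[OF C0_\<phi>] by metis
  obtain C2 where C2: "\<And>t. norm (phi_trans ((opT ^^ 2) \<phi>) t \<alpha>) \<le> C2"
    using phi_trans_bounded[OF C0[of 2]] by (metis order_refl)
  show ?thesis
  proof (rule integrable_moment_of_decay[OF _ _ k])
    fix t
    have "(1 + t\<^sup>2) * norm (phi_trans \<phi> t \<alpha>) = norm (phi_trans \<phi> t \<alpha>) + norm (phi_trans ((opT ^^ 2) \<phi>) t \<alpha>)"
      using eigen[of 2 t] by (simp add: norm_mult norm_power distrib_right)
    also have "\<dots> \<le> C + C2" using C C2 by (rule add_mono)
    finally show "(1 + t\<^sup>2) * norm (phi_trans \<phi> t \<alpha>) \<le> C + C2" .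
  qed measurable
qed

lemma tau_density_moment:
  assumes \<phi>: "\<phi> \<in> domT" and k: "k \<le> 2"
  shows "integrable lborel (\<lambda>t. tau_density \<phi> t * t ^ k)"
    and "inner_L2 \<phi> ((opT ^^ k) \<phi>) = complex_of_real (\<integral>t. tau_density \<phi> t * t ^ k \<partial>lborel)"
proof -
  obtain a b where a: "0 < a" "a \<le> b"
    and C0: "\<And>j. j \<le> 2 \<Longrightarrow> shell_C0 a b ((opT ^^ j) \<phi>)"
    and eigen: "\<And>j t \<alpha>. j \<le> 2 \<Longrightarrow> \<alpha> \<in> {1, -1} \<Longrightarrow> phi_trans ((opT ^^ j) \<phi>) t \<alpha> = t ^ j * phi_trans \<phi> t \<alpha>"
    using domT_opT_powers[OF \<phi>] by blast
  note moment_int = integrable_moment_phi_trans[OF \<phi> k]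
  have product: "cnj (phi_trans \<phi> t \<alpha>) * phi_trans ((opT ^^ k) \<phi>) t \<alpha>
      = complex_of_real (t ^ k * (cmod (phi_trans \<phi> t \<alpha>))\<^sup>2)" if "\<alpha> \<in> {1, -1}" for t \<alpha>
    unfolding eigen[OF k that] of_real_mult of_real_power[of t] complex_norm_square by (simp only: ac_simps)
  have density_moment: "tau_density \<phi> t * t ^ k = (\<Sum>\<alpha>\<in>{1, -1::real}. t ^ k * (cmod (phi_trans \<phi> t \<alpha>))\<^sup>2)" for t
    unfolding tau_density_def sum_distrib_right by (simp add: mult.commute)
  show "integrable lborel (\<lambda>t. tau_density \<phi> t * t ^ k)"
    unfolding density_moment using moment_int by (intro Bochner_Integration.integrable_sum) auto
  have "inner_L2 \<phi> ((opT ^^ k) \<phi>)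
      = (\<Sum>\<alpha>\<in>{1, -1::real}. \<integral>t. cnj (phi_trans \<phi> t \<alpha>) * phi_trans ((opT ^^ k) \<phi>) t \<alpha> \<partial>lborel)"
    using C0[of 0] by (intro phi_trans_parseval[OF _ C0[OF k] a, symmetric])
      (simp_all only: funpow_0 product integrable_of_real moment_int)
  also have "\<dots> = (\<Sum>\<alpha>\<in>{1, -1::real}. complex_of_real (\<integral>t. t ^ k * (cmod (phi_trans \<phi> t \<alpha>))\<^sup>2 \<partial>lborel))"
    by (intro sum.cong refl) (simp only: product integral_complex_of_real)
  also have "\<dots> = complex_of_real (\<integral>t. tau_density \<phi> t * t ^ k \<partial>lborel)"
    unfolding density_moment using moment_int by (simp add: Bochner_Integration.integral_sum)
  finally show "inner_L2 \<phi> ((opT ^^ k) \<phi>) = complex_of_real (\<integral>t. tau_density \<phi> t * t ^ k \<partial>lborel)" .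
qed

lemma tau_phi_moment:
  assumes \<phi>: "\<phi> \<in> domT" and k: "k \<le> 2"
  shows "integrable (tau_phi \<phi>) (\<lambda>t. t ^ k)"
    and "inner_L2 \<phi> ((opT ^^ k) \<phi>) = complex_of_real (\<integral>t. t ^ k \<partial>tau_phi \<phi>)"
proof -
  obtain a b where "shell_C0 a b \<phi>"
    using domT_opT_powers[OF \<phi>] by (metis funpow_0 zero_le)
  then have [measurable]: "\<phi> \<in> borel_measurable lborel"
    by (simp add: shell_C0_def borel_measurable_continuous_onI)
  have tau: "tau_phi \<phi> = density lborel (tau_density \<phi>)"
    unfolding tau_phi_def tau_density_def ..
  have density_measurable: "tau_density \<phi> \<in> borel_measurable lborel"
    unfolding tau_density_def by measurable
  have density_nonneg: "AE t in lborel. 0 \<le> tau_density \<phi> t"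
    unfolding tau_density_def by (intro AE_I2 sum_nonneg) auto
  show "integrable (tau_phi \<phi>) (\<lambda>t. t ^ k)"
    unfolding tau using tau_density_moment(1)[OF \<phi> k]
    by (subst integrable_density[OF _ density_measurable density_nonneg]) simp_all
  show "inner_L2 \<phi> ((opT ^^ k) \<phi>) = complex_of_real (\<integral>t. t ^ k \<partial>tau_phi \<phi>)"
    unfolding tau using tau_density_moment(2)[OF \<phi> k]
    by (subst integral_density[OF _ density_measurable density_nonneg]) simp_all
qed

theorem mainTheorem3:
  fixes \<phi> :: "real \<Rightarrow> complex"
  assumes "\<phi> \<in> domT"
    and "inner_L2 \<phi> \<phi> = 1"
  shows "integrable (tau_phi \<phi>) (\<lambda>t. t)
     \<and> inner_L2 \<phi> (opT \<phi>) = complex_of_real (\<integral>t. t \<partial>tau_phi \<phi>)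
     \<and> integrable (tau_phi \<phi>) (\<lambda>t. t\<^sup>2)
     \<and> inner_L2 \<phi> (opT (opT \<phi>)) = complex_of_real (\<integral>t. t\<^sup>2 \<partial>tau_phi \<phi>)
     \<and> sigmaT_sq \<phi> = complex_of_real (var_tau \<phi>)"
proof -
  have first: "integrable (tau_phi \<phi>) (\<lambda>t. t)"
    "inner_L2 \<phi> (opT \<phi>) = complex_of_real (\<integral>t. t \<partial>tau_phi \<phi>)"
    using tau_phi_moment[OF assms(1), of 1] by simp_all
  have second: "integrable (tau_phi \<phi>) (\<lambda>t. t\<^sup>2)"
    "inner_L2 \<phi> (opT (opT \<phi>)) = complex_of_real (\<integral>t. t\<^sup>2 \<partial>tau_phi \<phi>)"
    using tau_phi_moment[OF assms(1), of 2] by (simp_all add: numeral_2_eq_2)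
  have "sigmaT_sq \<phi> = complex_of_real (var_tau \<phi>)"
    unfolding sigmaT_sq_def var_tau_def mean_tau_def first(2) second(2) by simp
  with first second show ?thesis by blast
qed

end
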